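(* Let $V=\mathbb{C}^2$, $e\ge1$, $d=2e$, $r\ge 2$, and let $0\le p\le\lfloor re/2\rfloor$. Let $\alpha_r:S_r(S_d(V))\to S_2(S_{re}(V))$ be the map defined below and let $\pi_p:S_2(S_{re}(V))\to S_{rd-4p}(V)$ be the $SL_2$-equivariant projection onto the (unique) irreducible summand isomorphic to $S_{rd-4p}(V)$ in the decomposition $S_2(S_{re}(V))=\bigoplus_{p=0}^{\lfloor re/2\rfloor}S_{rd-4p}(V)$. Then $\pi_p\circ\alpha_r\neq 0$.
   Context: $S_k(V)$ is identified with binary forms of degree $k$ in $\underline{x}=(x_0,x_1)$, and $S_2(S_m(V))$ with polynomials in $\underline{x},\underline{y}=(y_0,y_1)$ bihomogeneous of bidegree $(m,m)$ and symmetric under swapping $\underline{x},\underline{y}$. The map $\alpha_r$ is defined on products $F_1\cdots F_r$ of degree-$d$ binary forms by $\alpha_r(F_1\cdots F_r)=\prod_{i=1}^r\bigl((y_0\partial_{x_0}+y_1\partial_{x_1})^eF_i(\underline{x})\bigr)$, extended linearly. (Up to a nonzero constant, $\pi_p(G)$ equals $[\Omega^{2p}G]_{\underline{y}:=\underline{x}}$ with $\Omega=\frac{\partial^2}{\partial x_0\partial y_1}-\frac{\partial^2}{\partial x_1\partial y_0}$.) *)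

theory Defs
  imports Complex_Main "HOL-Library.Poly_Mapping"
begin

text \<open>Polynomials with complex coefficients in the variables
  x0 = var 0, x1 = var 1, y0 = var 2, y1 = var 3, represented as finitely
  supported maps from monomials (exponent vectors) to coefficients.\<close>

type_synonym cpoly = "(nat \<Rightarrow>\<^sub>0 nat) \<Rightarrow>\<^sub>0 complex"

definition var :: "nat \<Rightarrow> cpoly" where
  "var i = Poly_Mapping.single (Poly_Mapping.single i 1) 1"

definition pd :: "nat \<Rightarrow> cpoly \<Rightarrow> cpoly" where
  "pd i P = (\<Sum>m\<in>Poly_Mapping.keys P. Poly_Mapping.single (m - Poly_Mapping.single i 1)
                              (of_nat (Poly_Mapping.lookup m i) * Poly_Mapping.lookup P m))"

definition binary_form :: "nat \<Rightarrow> cpoly \<Rightarrow> bool" where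
  "binary_form k F \<longleftrightarrow>
     (\<forall>m\<in>Poly_Mapping.keys F. (\<forall>i. i \<noteq> 0 \<and> i \<noteq> 1 \<longrightarrow> Poly_Mapping.lookup m i = 0) \<and> Poly_Mapping.lookup m 0 + Poly_Mapping.lookup m 1 = k)"

definition polar :: "cpoly \<Rightarrow> cpoly" where
  "polar F = var 2 * pd 0 F + var 3 * pd 1 F"

definition Omega :: "cpoly \<Rightarrow> cpoly" where
  "Omega G = pd 0 (pd 3 G) - pd 1 (pd 2 G)"

definition subst_yx :: "cpoly \<Rightarrow> cpoly" where
  "subst_yx P = (\<Sum>m\<in>Poly_Mapping.keys P. Poly_Mapping.single
      (Poly_Mapping.single 0 (Poly_Mapping.lookup m 0 + Poly_Mapping.lookup m 2) + Poly_Mapping.single 1 (Poly_Mapping.lookup m 1 + Poly_Mapping.lookup m 3))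
      (Poly_Mapping.lookup P m))"

text \<open>alpha_r on a product F_1 ... F_r of degree-d forms (e-th polarization of each factor).\<close>
definition alpha :: "nat \<Rightarrow> nat \<Rightarrow> (nat \<Rightarrow> cpoly) \<Rightarrow> cpoly" where
  "alpha r e F = (\<Prod>i<r. (polar ^^ e) (F i))"

text \<open>The projection pi_p (up to a nonzero constant): [Omega^(2p) G]_{y:=x}.\<close>
definition proj :: "nat \<Rightarrow> cpoly \<Rightarrow> cpoly" where
  "proj p G = subst_yx ((Omega ^^ (2 * p)) G)"

end

theory Submission
  imports Defs "HOL-Library.Complex_Order"
begin

(* Take F_j = (x0 + t_j x1)^d with t_j = \<i> for s = r div 2 indices j, t_j = -\<i> for s others and
   t_j = 0 for the remaining one when r is odd. The e-th polarization of (x0 + t x1)^(2e) is a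
   positive multiple of (x0 + t x1)^e (y0 + t y1)^e, and (x0 + \<i> x1)(x0 - \<i> x1) = x0^2 + x1^2, so
   G = alpha_r F is a positive multiple of (x0^2 + x1^2)^(se) (y0^2 + y1^2)^(se) (x0 y0)^((r-2s)e):
   it has nonnegative coefficients and is even in x1.
   Changing the sign of x1 turns Omega into Omega_plus = d^2/dx0 dy1 + d^2/dx1 dy0, which preserves
   nonnegativity of coefficients and has no cancellation. Hence Omega^(2p) G has nonnegative
   coefficients on all monomials free of x1, and x0^(re-2p) y0^(re-2p) occurs in it: it is reached
   from a monomial of G by 2p derivative steps. After y := x the coefficient of x0^(2(re-2p)) only
   collects monomials free of x1 and y1, so it is a nonzero sum of nonnegative terms. *)

abbreviation lookup :: "('a \<Rightarrow>\<^sub>0 'b::zero) \<Rightarrow> 'a \<Rightarrow> 'b" where "lookup \<equiv> Poly_Mapping.lookup"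
abbreviation single :: "'a \<Rightarrow> 'b::zero \<Rightarrow> 'a \<Rightarrow>\<^sub>0 'b" where "single \<equiv> Poly_Mapping.single"
abbreviation keys :: "('a \<Rightarrow>\<^sub>0 'b::zero) \<Rightarrow> 'a set" where "keys \<equiv> Poly_Mapping.keys"

lemma sum_single_lookup: "(\<Sum>m\<in>keys P. single m (lookup P m)) = P"
  by (rule poly_mapping_eqI)
     (auto simp: lookup_sum lookup_single when_def in_keys_iff split: if_splits)

lemma lookup_times_keys:
  fixes P Q :: "'a::comm_monoid_add \<Rightarrow>\<^sub>0 'b::comm_semiring_0"
  shows "lookup (P * Q) k =
    (\<Sum>a\<in>keys P. \<Sum>b\<in>keys Q. if a + b = k then lookup P a * lookup Q b else 0)"
proof -
  have "P * Q = (\<Sum>a\<in>keys P. single a (lookup P a)) * (\<Sum>b\<in>keys Q. single b (lookup Q b))"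
    by (simp only: sum_single_lookup)
  also have "\<dots> = (\<Sum>a\<in>keys P. \<Sum>b\<in>keys Q. single (a + b) (lookup P a * lookup Q b))"
    by (simp add: sum_product mult_single)
  finally show ?thesis
    by (simp add: lookup_sum lookup_single when_def)
qed

lemma diff_single_add_cancel:
  fixes m :: "'a \<Rightarrow>\<^sub>0 nat"
  assumes "0 < lookup m i"
  shows "m - single i 1 + single i 1 = m"
  using assms by (intro poly_mapping_eqI) (auto simp: lookup_add lookup_minus lookup_single when_def)

lemma diff_single_eq_iff:
  fixes m k :: "'a \<Rightarrow>\<^sub>0 nat"
  assumes "0 < lookup m i"
  shows "m - single i 1 = k \<longleftrightarrow> m = k + single i 1"
  using diff_single_add_cancel[OF assms] by auto

lemma lookup_single_diff_single:
  "lookup (single (m - single i 1) (of_nat (lookup m i) * c)) k =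
    (if m = k + single i 1 then of_nat (lookup k i + 1) * c else (0::complex))"
proof (cases "lookup m i = 0")
  case True
  then have "m \<noteq> k + single i 1"
    by (auto simp: lookup_add)
  with True show ?thesis
    by simp
next
  case False
  then have "m - single i 1 = k \<longleftrightarrow> m = k + single i 1"
    by (intro diff_single_eq_iff) simp
  then show ?thesis
    unfolding lookup_single when_def by (auto simp: lookup_add)
qed

lemma lookup_pd: "lookup (pd i P) k = of_nat (lookup k i + 1) * lookup P (k + single i 1)"
  unfolding pd_def lookup_sum lookup_single_diff_single by (simp add: in_keys_iff)

lemma pd_single: "pd i (single m c) = single (m - single i 1) (of_nat (lookup m i) * c)"
  by (rule poly_mapping_eqI)
     (simp only: lookup_pd lookup_single_diff_single, simp add: lookup_single when_def)

lemma pd_add: "pd i (P + Q) = pd i P + pd i Q"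
  and pd_sum: "pd i (sum f A) = (\<Sum>a\<in>A. pd i (f a))"
  by (auto intro!: poly_mapping_eqI simp: lookup_pd lookup_add lookup_minus lookup_sum
           algebra_simps sum_distrib_left)

lemma pd_mult_single:
  "pd i (single a c * single b c') = pd i (single a c) * single b c' + single a c * pd i (single b c')"
proof -
  have "b + (a - single i 1) = a + b - single i 1" if "0 < lookup a i"
    using that by (intro poly_mapping_eqI) (auto simp: lookup_add lookup_minus lookup_single when_def)
  moreover have "a + (b - single i 1) = a + b - single i 1" if "0 < lookup b i"
    using that by (intro poly_mapping_eqI) (auto simp: lookup_add lookup_minus lookup_single when_def)
  ultimately show ?thesis
    by (cases "0 < lookup a i"; cases "0 < lookup b i")
       (simp_all add: mult_single pd_single lookup_add algebra_simps flip: single_add)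
qed

lemma pd_mult: "pd i (P * Q) = pd i P * Q + P * pd i Q"
proof -
  have "pd i (P * Q) = pd i ((\<Sum>a\<in>keys P. single a (lookup P a)) * (\<Sum>b\<in>keys Q. single b (lookup Q b)))"
    by (simp only: sum_single_lookup)
  also have "\<dots> = pd i (\<Sum>a\<in>keys P. single a (lookup P a)) * (\<Sum>b\<in>keys Q. single b (lookup Q b))
      + (\<Sum>a\<in>keys P. single a (lookup P a)) * pd i (\<Sum>b\<in>keys Q. single b (lookup Q b))"
    by (simp add: sum_product pd_sum pd_mult_single sum.distrib)
  finally show ?thesis
    by (simp only: sum_single_lookup)
qed

section \<open>Polarization of powers of linear forms\<close>

definition lin_x :: "complex \<Rightarrow> cpoly" where
  "lin_x t = var 0 + single 0 t * var 1"

definition lin_y :: "complex \<Rightarrow> cpoly" where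
  "lin_y t = var 2 + single 0 t * var 3"

lemma pd_var: "pd i (var j) = (if i = j then 1 else 0)"
  by (simp add: var_def pd_single lookup_single when_def)

lemma pd_const: "pd i (single 0 c) = 0"
  by (simp add: pd_single)

lemma pd_of_nat: "pd i (of_nat n) = 0"
  using pd_const[of i "of_nat n"] by simp

lemma polar_mult: "polar (P * Q) = polar P * Q + P * polar Q"
  by (simp add: polar_def pd_mult algebra_simps)

lemma polar_of_nat: "polar (of_nat n) = 0"
  by (simp add: polar_def pd_of_nat)

lemma polar_power: "polar (P ^ n) = of_nat n * P ^ (n - 1) * polar P"
proof (induction n)
  case 0
  show ?case
    using polar_of_nat[of 1] by simp
next
  case (Suc n)
  then show ?case
    by (cases n) (simp_all add: polar_mult algebra_simps)
qed

lemma polar_lin_x: "polar (lin_x t) = lin_y t"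
  by (simp add: polar_def lin_x_def lin_y_def pd_add pd_mult pd_var pd_const)

lemma polar_lin_y: "polar (lin_y t) = 0"
  by (simp add: polar_def lin_y_def pd_add pd_mult pd_var pd_const)

lemma polar_iterate_lin_x_power:
  "j \<le> d \<Longrightarrow> (polar ^^ j) (lin_x t ^ d) = of_nat (\<Prod>i<j. d - i) * lin_x t ^ (d - j) * lin_y t ^ j"
proof (induction j)
  case 0
  show ?case by simp
next
  case (Suc j)
  then have "(polar ^^ Suc j) (lin_x t ^ d) =
      polar (of_nat (\<Prod>i<j. d - i) * (lin_x t ^ (d - j) * lin_y t ^ j))"
    by (simp add: mult.assoc del: of_nat_prod)
  also have "\<dots> = of_nat (\<Prod>i<j. d - i) * (of_nat (d - j) * lin_x t ^ (d - Suc j) * lin_y t ^ Suc j)"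
    by (simp add: polar_mult polar_power polar_of_nat polar_lin_x polar_lin_y algebra_simps del: of_nat_prod)
  also have "\<dots> = of_nat (\<Prod>i<Suc j. d - i) * lin_x t ^ (d - Suc j) * lin_y t ^ Suc j"
    by (simp add: mult_ac)
  finally show ?case .
qed

lemma binary_form_mult: "binary_form a P \<Longrightarrow> binary_form b Q \<Longrightarrow> binary_form (a + b) (P * Q)"
  unfolding binary_form_def using keys_mult[of P Q] by (fastforce simp: lookup_add)

lemma binary_form_lin_x: "binary_form 1 (lin_x t)"
proof -
  have "lin_x t = single (single 0 1) 1 + single (single 1 1) t"
    by (simp add: lin_x_def var_def mult_single)
  then have "keys (lin_x t) \<subseteq> keys (single (single 0 1) (1::complex)) \<union> keys (single (single 1 1) t)"
    by (simp only: keys_add)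
  then have "keys (lin_x t) \<subseteq> {single 0 1, single 1 1}"
    by (auto split: if_splits)
  then show ?thesis
    unfolding binary_form_def by (auto simp: lookup_single when_def)
qed

lemma binary_form_lin_x_power: "binary_form n (lin_x t ^ n)"
proof (induction n)
  case 0
  show ?case by (simp add: binary_form_def)
next
  case (Suc n)
  then show ?case
    using binary_form_mult[OF binary_form_lin_x Suc] by simp
qed

section \<open>Nonnegative coefficients and the twisted Omega operator\<close>

(* The order on complex is that of Complex_Order: 0 \<le> z means that z is a nonnegative real. *)
definition nonneg_coeffs :: "cpoly \<Rightarrow> bool" where
  "nonneg_coeffs P \<longleftrightarrow> (\<forall>m. 0 \<le> lookup P m)"

lemma nonneg_coeffs_add: "nonneg_coeffs P \<Longrightarrow> nonneg_coeffs Q \<Longrightarrow> nonneg_coeffs (P + Q)"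
  by (simp add: nonneg_coeffs_def lookup_add)

lemma nonneg_coeffs_single: "0 \<le> c \<Longrightarrow> nonneg_coeffs (single k c)"
  by (simp add: nonneg_coeffs_def lookup_single when_def)

lemma nonneg_coeffs_mult: "nonneg_coeffs P \<Longrightarrow> nonneg_coeffs Q \<Longrightarrow> nonneg_coeffs (P * Q)"
  unfolding nonneg_coeffs_def lookup_times_keys by (auto intro!: sum_nonneg)

lemma nonneg_coeffs_power: "nonneg_coeffs P \<Longrightarrow> nonneg_coeffs (P ^ n)"
  by (induction n) (simp_all add: nonneg_coeffs_mult nonneg_coeffs_single less_eq_complex_def flip: single_one)

lemma nonneg_coeffs_of_nat: "nonneg_coeffs (of_nat n)"
  by (simp add: nonneg_coeffs_single less_eq_complex_def flip: single_of_nat)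

lemma nonneg_coeffs_var: "nonneg_coeffs (var j)"
  by (simp add: var_def nonneg_coeffs_single less_eq_complex_def)

lemma add_in_keys_mult:
  assumes "nonneg_coeffs P" "nonneg_coeffs Q" "a \<in> keys P" "b \<in> keys Q"
  shows "a + b \<in> keys (P * Q)"
proof -
  define f where "f x y = (if x + y = a + b then lookup P x * lookup Q y else 0)" for x y
  have nonneg: "0 \<le> f x y" for x y
    using assms(1,2) by (simp add: f_def nonneg_coeffs_def)
  have "f a b \<noteq> 0"
    using assms(3,4) by (simp add: f_def in_keys_iff)
  then have "(\<Sum>x\<in>keys P. \<Sum>y\<in>keys Q. f x y) \<noteq> 0"
    using assms(3,4) nonneg by (auto simp: sum_nonneg_eq_0_iff sum_nonneg)
  then show ?thesis
    by (simp add: in_keys_iff lookup_times_keys f_def)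
qed

definition even_in_x1 :: "cpoly \<Rightarrow> bool" where
  "even_in_x1 P \<longleftrightarrow> (\<forall>m. odd (lookup m 1) \<longrightarrow> lookup P m = 0)"

lemma even_in_x1_add: "even_in_x1 P \<Longrightarrow> even_in_x1 Q \<Longrightarrow> even_in_x1 (P + Q)"
  by (simp add: even_in_x1_def lookup_add)

lemma even_in_x1_single: "even (lookup k 1) \<Longrightarrow> even_in_x1 (single k c)"
  by (simp add: even_in_x1_def lookup_single when_def)

lemma even_in_x1_mult: "even_in_x1 P \<Longrightarrow> even_in_x1 Q \<Longrightarrow> even_in_x1 (P * Q)"
  unfolding even_in_x1_def lookup_times_keys by (auto intro!: sum.neutral simp: lookup_add)

lemma even_in_x1_power: "even_in_x1 P \<Longrightarrow> even_in_x1 (P ^ n)"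
  by (induction n) (simp_all add: even_in_x1_mult even_in_x1_single flip: single_one)

lemma even_in_x1_of_nat: "even_in_x1 (of_nat n)"
  by (simp add: even_in_x1_single flip: single_of_nat)

lemma even_in_x1_var: "j \<noteq> 1 \<Longrightarrow> even_in_x1 (var j)"
  by (simp add: var_def even_in_x1_single lookup_single)

definition xy_monomial :: "nat \<Rightarrow> nat \<Rightarrow> nat \<Rightarrow> nat \<Rightarrow> (nat \<Rightarrow>\<^sub>0 nat)" where
  "xy_monomial a b c d = single 0 a + single 1 b + single 2 c + single 3 d"

lemma lookup_xy_monomial:
  "lookup (xy_monomial a b c d) 0 = a" "lookup (xy_monomial a b c d) 1 = b"
  "lookup (xy_monomial a b c d) 2 = c" "lookup (xy_monomial a b c d) 3 = d"
  by (simp_all add: xy_monomial_def lookup_add lookup_single)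

lemma xy_monomial_add:
  "xy_monomial a b c d + xy_monomial a' b' c' d' = xy_monomial (a + a') (b + b') (c + c') (d + d')"
  by (simp add: xy_monomial_def single_add ac_simps)

lemma xy_monomial_zero: "xy_monomial 0 0 0 0 = 0"
  by (simp add: xy_monomial_def)

lemma xy_monomial_in_keys_power:
  assumes "nonneg_coeffs P" "xy_monomial a b c d \<in> keys P"
  shows "xy_monomial (n * a) (n * b) (n * c) (n * d) \<in> keys (P ^ n)"
proof (induction n)
  case 0
  show ?case by (simp add: xy_monomial_zero)
next
  case (Suc n)
  then show ?case
    using add_in_keys_mult[OF assms(1) nonneg_coeffs_power[OF assms(1)] assms(2) Suc]
    by (simp add: xy_monomial_add)
qed

definition Omega_plus :: "cpoly \<Rightarrow> cpoly" where
  "Omega_plus G = pd 0 (pd 3 G) + pd 1 (pd 2 G)"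

lemma lookup_Omega:
  "lookup (Omega P) m =
     of_nat (lookup m 0 + 1) * of_nat (lookup m 3 + 1) * lookup P (m + xy_monomial 1 0 0 1)
   - of_nat (lookup m 1 + 1) * of_nat (lookup m 2 + 1) * lookup P (m + xy_monomial 0 1 1 0)"
  by (simp add: Omega_def xy_monomial_def lookup_minus lookup_pd lookup_add lookup_single ac_simps)

lemma lookup_Omega_plus:
  "lookup (Omega_plus P) m =
     of_nat (lookup m 0 + 1) * of_nat (lookup m 3 + 1) * lookup P (m + xy_monomial 1 0 0 1)
   + of_nat (lookup m 1 + 1) * of_nat (lookup m 2 + 1) * lookup P (m + xy_monomial 0 1 1 0)"
  by (simp add: Omega_plus_def xy_monomial_def lookup_pd lookup_add lookup_single ac_simps)

(* The substitution x1 := -x1 conjugates Omega into Omega_plus. *)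
lemma lookup_Omega_iterate_twist:
  assumes "\<And>m. lookup Q m = (-1) ^ lookup m 1 * lookup P m"
  shows "lookup ((Omega ^^ k) Q) m = (-1) ^ lookup m 1 * lookup ((Omega_plus ^^ k) P) m"
proof (induction k arbitrary: m)
  case 0
  show ?case using assms by simp
next
  case (Suc k)
  then show ?case
    by (simp add: lookup_Omega lookup_Omega_plus lookup_add lookup_xy_monomial[simplified] algebra_simps)
qed

lemma nonneg_coeffs_Omega_plus: "nonneg_coeffs P \<Longrightarrow> nonneg_coeffs (Omega_plus P)"
  by (simp add: nonneg_coeffs_def lookup_Omega_plus less_eq_complex_def)

lemma nonneg_coeffs_Omega_plus_iterate: "nonneg_coeffs P \<Longrightarrow> nonneg_coeffs ((Omega_plus ^^ k) P)"
  by (induction k) (simp_all add: nonneg_coeffs_Omega_plus)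

lemma in_keys_Omega_plus:
  assumes "nonneg_coeffs P"
    and "m + xy_monomial 1 0 0 1 \<in> keys P \<or> m + xy_monomial 0 1 1 0 \<in> keys P"
  shows "m \<in> keys (Omega_plus P)"
proof -
  define a where "a = of_nat (lookup m 0 + 1) * of_nat (lookup m 3 + 1) * lookup P (m + xy_monomial 1 0 0 1)"
  define b where "b = of_nat (lookup m 1 + 1) * of_nat (lookup m 2 + 1) * lookup P (m + xy_monomial 0 1 1 0)"
  have "0 \<le> a" "0 \<le> b"
    using assms(1) by (simp_all add: a_def b_def nonneg_coeffs_def less_eq_complex_def)
  moreover have "a \<noteq> 0 \<or> b \<noteq> 0"
    using assms(2) by (auto simp: a_def b_def in_keys_iff simp del: of_nat_Suc)
  moreover have "lookup (Omega_plus P) m = a + b"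
    by (simp only: lookup_Omega_plus a_def b_def)
  ultimately show ?thesis
    by (simp add: in_keys_iff add_nonneg_eq_0_iff)
qed

lemma in_keys_Omega_plus_iterate:
  assumes "nonneg_coeffs P" and "m + xy_monomial a b b a \<in> keys P"
  shows "m \<in> keys ((Omega_plus ^^ (a + b)) P)"
  using assms(2)
proof (induction "a + b" arbitrary: a b m)
  case 0
  then show ?case by (simp add: xy_monomial_zero)
next
  case (Suc k)
  have nonneg: "nonneg_coeffs ((Omega_plus ^^ k) P)"
    using assms(1) by (rule nonneg_coeffs_Omega_plus_iterate)
  consider a' where "a = Suc a'" | b' where "b = Suc b'"
    using Suc.hyps(2) by (cases a) auto
  then show ?case
  proof cases
    case 1
    then have "(m + xy_monomial 1 0 0 1) + xy_monomial a' b b a' \<in> keys P"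
      using Suc.prems by (simp add: xy_monomial_add add.assoc)
    then have "m + xy_monomial 1 0 0 1 \<in> keys ((Omega_plus ^^ k) P)"
      using Suc.hyps 1 by simp
    then show ?thesis
      using in_keys_Omega_plus[OF nonneg] by (simp flip: Suc.hyps(2))
  next
    case 2
    then have "(m + xy_monomial 0 1 1 0) + xy_monomial a b' b' a \<in> keys P"
      using Suc.prems by (simp add: xy_monomial_add add.assoc)
    then have "m + xy_monomial 0 1 1 0 \<in> keys ((Omega_plus ^^ k) P)"
      using Suc.hyps 2 by simp
    then show ?thesis
      using in_keys_Omega_plus[OF nonneg] by (simp flip: Suc.hyps(2))
  qed
qed

lemma lookup_subst_yx:
  "lookup (subst_yx P) n =
    (\<Sum>m\<in>keys P. if single 0 (lookup m 0 + lookup m 2) + single 1 (lookup m 1 + lookup m 3) = n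
                  then lookup P m else 0)"
  by (simp add: subst_yx_def lookup_sum lookup_single when_def)

(* After y := x, a monomial free of x1 only receives the monomials free of x1 and y1. *)
lemma subst_yx_nonzero:
  assumes "m \<in> keys Q" "lookup m 1 = 0" "lookup m 3 = 0"
    and "\<And>m'. lookup m' 1 = 0 \<Longrightarrow> lookup m' 3 = 0 \<Longrightarrow> 0 \<le> lookup Q m'"
  shows "subst_yx Q \<noteq> 0"
proof -
  define \<kappa> :: "(nat \<Rightarrow>\<^sub>0 nat) \<Rightarrow> (nat \<Rightarrow>\<^sub>0 nat)"
    where "\<kappa> m' = single 0 (lookup m' 0 + lookup m' 2) + single 1 (lookup m' 1 + lookup m' 3)" for m'
  define f where "f m' = (if \<kappa> m' = \<kappa> m then lookup Q m' else 0)" for m'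
  have "0 \<le> f m'" for m'
  proof (cases "\<kappa> m' = \<kappa> m")
    case True
    then have "lookup (\<kappa> m') 1 = lookup (\<kappa> m) 1"
      by simp
    then have "lookup m' 1 = 0 \<and> lookup m' 3 = 0"
      using assms(2,3) by (simp add: \<kappa>_def lookup_add lookup_single when_def)
    then show ?thesis
      using assms(4) by (simp add: f_def)
  qed (simp add: f_def)
  moreover have "f m \<noteq> 0"
    using assms(1) by (simp add: f_def in_keys_iff)
  ultimately have "lookup (subst_yx Q) (\<kappa> m) \<noteq> 0"
    using assms(1) unfolding lookup_subst_yx by (auto simp: sum_nonneg_eq_0_iff f_def \<kappa>_def)
  then show ?thesis
    by auto
qed

lemma proj_nonzero:
  assumes "nonneg_coeffs G" "even_in_x1 G"
    and "m \<in> keys ((Omega_plus ^^ (2 * p)) G)" "lookup m 1 = 0" "lookup m 3 = 0"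
  shows "proj p G \<noteq> 0"
proof -
  have "lookup G m' = (-1) ^ lookup m' 1 * lookup G m'" for m'
    using assms(2) by (cases "even (lookup m' 1)") (auto simp: even_in_x1_def)
  then have twist: "lookup ((Omega ^^ (2 * p)) G) m' = (-1) ^ lookup m' 1 * lookup ((Omega_plus ^^ (2 * p)) G) m'"
    for m'
    by (rule lookup_Omega_iterate_twist)
  have "nonneg_coeffs ((Omega_plus ^^ (2 * p)) G)"
    using assms(1) by (rule nonneg_coeffs_Omega_plus_iterate)
  then have "0 \<le> lookup ((Omega ^^ (2 * p)) G) m'" if "lookup m' 1 = 0" for m'
    using that by (simp add: twist nonneg_coeffs_def)
  moreover have "m \<in> keys ((Omega ^^ (2 * p)) G)"
    using assms(3,4) by (simp add: in_keys_iff twist)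
  ultimately show ?thesis
    unfolding proj_def using assms(4,5) by (intro subst_yx_nonzero) auto
qed

section \<open>The witness\<close>

definition sq_x :: cpoly where "sq_x = var 0 ^ 2 + var 1 ^ 2"

definition sq_y :: cpoly where "sq_y = var 2 ^ 2 + var 3 ^ 2"

lemma var_eq_single:
  "var 0 = single (xy_monomial 1 0 0 0) 1" "var 1 = single (xy_monomial 0 1 0 0) 1"
  "var 2 = single (xy_monomial 0 0 1 0) 1" "var 3 = single (xy_monomial 0 0 0 1) 1"
  by (simp_all add: var_def xy_monomial_def)

lemma sq_x_eq: "sq_x = single (xy_monomial 2 0 0 0) 1 + single (xy_monomial 0 2 0 0) 1"
  and sq_y_eq: "sq_y = single (xy_monomial 0 0 2 0) 1 + single (xy_monomial 0 0 0 2) 1"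
  unfolding sq_x_def sq_y_def var_eq_single power2_eq_square mult_single xy_monomial_add
  by (simp_all add: numeral_2_eq_2)

lemma const_i_squared: "single 0 \<i> * single 0 \<i> = (-1 :: cpoly)"
  by (simp add: mult_single single_uminus)

lemma lin_x_conj_mult: "lin_x \<i> * lin_x (- \<i>) = sq_x"
proof -
  have "lin_x \<i> * lin_x (- \<i>) = var 0 ^ 2 - single 0 \<i> * single 0 \<i> * var 1 ^ 2"
    by (simp add: lin_x_def single_uminus power2_eq_square algebra_simps)
  then show ?thesis
    by (simp add: const_i_squared sq_x_def)
qed

lemma lin_y_conj_mult: "lin_y \<i> * lin_y (- \<i>) = sq_y"
proof -
  have "lin_y \<i> * lin_y (- \<i>) = var 2 ^ 2 - single 0 \<i> * single 0 \<i> * var 3 ^ 2"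
    by (simp add: lin_y_def single_uminus power2_eq_square algebra_simps)
  then show ?thesis
    by (simp add: const_i_squared sq_y_def)
qed

lemma nonneg_coeffs_sq_x: "nonneg_coeffs sq_x"
  and nonneg_coeffs_sq_y: "nonneg_coeffs sq_y"
  by (simp_all add: sq_x_eq sq_y_eq nonneg_coeffs_add nonneg_coeffs_single less_eq_complex_def)

lemma even_in_x1_sq_x: "even_in_x1 sq_x"
  and even_in_x1_sq_y: "even_in_x1 sq_y"
  by (simp_all add: sq_x_eq sq_y_eq even_in_x1_add even_in_x1_single lookup_xy_monomial[simplified])

lemma in_keys_sq_x_power: "u \<le> N \<Longrightarrow> xy_monomial (2 * (N - u)) (2 * u) 0 0 \<in> keys (sq_x ^ N)"
  and in_keys_sq_y_power: "v \<le> N \<Longrightarrow> xy_monomial 0 0 (2 * (N - v)) (2 * v) \<in> keys (sq_y ^ N)"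
proof -
  have "xy_monomial 2 0 0 0 \<in> keys sq_x" "xy_monomial 0 2 0 0 \<in> keys sq_x"
    "xy_monomial 0 0 2 0 \<in> keys sq_y" "xy_monomial 0 0 0 2 \<in> keys sq_y"
    by (simp_all add: sq_x_eq sq_y_eq in_keys_iff lookup_add lookup_single when_def xy_monomial_def)
  then have "xy_monomial ((N - u) * 2) 0 0 0 + xy_monomial 0 (u * 2) 0 0 \<in> keys (sq_x ^ (N - u) * sq_x ^ u)"
    and "xy_monomial 0 0 ((N - v) * 2) 0 + xy_monomial 0 0 0 (v * 2) \<in> keys (sq_y ^ (N - v) * sq_y ^ v)"
    using nonneg_coeffs_sq_x nonneg_coeffs_sq_y
    by (auto intro!: add_in_keys_mult nonneg_coeffs_power
        dest: xy_monomial_in_keys_power[where n = "N - u"] xy_monomial_in_keys_power[where n = u]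
              xy_monomial_in_keys_power[where n = "N - v"] xy_monomial_in_keys_power[where n = v])
  then show "u \<le> N \<Longrightarrow> xy_monomial (2 * (N - u)) (2 * u) 0 0 \<in> keys (sq_x ^ N)"
    and "v \<le> N \<Longrightarrow> xy_monomial 0 0 (2 * (N - v)) (2 * v) \<in> keys (sq_y ^ N)"
    by (simp_all add: xy_monomial_add mult.commute flip: power_add)
qed

definition witness_poly :: "nat \<Rightarrow> nat \<Rightarrow> nat \<Rightarrow> cpoly" where
  "witness_poly c N A = of_nat c * sq_x ^ N * sq_y ^ N * (var 0 * var 2) ^ A"

lemma nonneg_coeffs_witness_poly: "nonneg_coeffs (witness_poly c N A)"
  by (simp add: witness_poly_def nonneg_coeffs_mult nonneg_coeffs_power nonneg_coeffs_of_nat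
      nonneg_coeffs_sq_x nonneg_coeffs_sq_y nonneg_coeffs_var)

lemma even_in_x1_witness_poly: "even_in_x1 (witness_poly c N A)"
  by (simp add: witness_poly_def even_in_x1_mult even_in_x1_power even_in_x1_of_nat
      even_in_x1_sq_x even_in_x1_sq_y even_in_x1_var)

lemma in_keys_witness_poly:
  assumes "0 < c" "u \<le> N" "v \<le> N"
  shows "xy_monomial (2 * (N - u) + A) (2 * u) (2 * (N - v) + A) (2 * v) \<in> keys (witness_poly c N A)"
proof -
  have "xy_monomial 1 0 1 0 \<in> keys (var 0 * var 2)"
    by (simp add: var_eq_single mult_single xy_monomial_add)
  then have "xy_monomial A 0 A 0 \<in> keys ((var 0 * var 2) ^ A)"
    using xy_monomial_in_keys_power[of "var 0 * var 2" 1 0 1 0 A]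
    by (simp add: nonneg_coeffs_mult nonneg_coeffs_var)
  moreover have "xy_monomial 0 0 0 0 \<in> keys (of_nat c :: cpoly)"
    using assms(1) by (simp add: xy_monomial_zero flip: single_of_nat)
  ultimately have "xy_monomial 0 0 0 0 + xy_monomial (2 * (N - u)) (2 * u) 0 0
      + xy_monomial 0 0 (2 * (N - v)) (2 * v) + xy_monomial A 0 A 0 \<in> keys (witness_poly c N A)"
    unfolding witness_poly_def using assms(2,3)
    by (intro add_in_keys_mult in_keys_sq_x_power in_keys_sq_y_power)
       (simp_all add: nonneg_coeffs_mult nonneg_coeffs_power nonneg_coeffs_of_nat nonneg_coeffs_var
        nonneg_coeffs_sq_x nonneg_coeffs_sq_y)
  then show ?thesis
    by (simp add: xy_monomial_add)
qed

definition witness_param :: "nat \<Rightarrow> nat \<Rightarrow> complex" where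
  "witness_param s i = (if i < s then \<i> else if i < 2 * s then - \<i> else 0)"

lemma alpha_witness_forms:
  assumes "2 * s \<le> r"
  shows "alpha r e (\<lambda>i. lin_x (witness_param s i) ^ (2 * e)) =
    witness_poly ((\<Prod>i<e. 2 * e - i) ^ r) (s * e) ((r - 2 * s) * e)"
proof -
  define c where "c = (\<Prod>i<e. 2 * e - i)"
  define h where "h t = of_nat c * (lin_x t * lin_y t) ^ e" for t
  have polar_e: "(polar ^^ e) (lin_x t ^ (2 * e)) = h t" for t
    using polar_iterate_lin_x_power[of e "2 * e" t]
    by (simp add: h_def c_def power_mult_distrib mult.assoc del: of_nat_prod)
  have "alpha r e (\<lambda>i. lin_x (witness_param s i) ^ (2 * e)) = (\<Prod>i<r. h (witness_param s i))"
    by (simp add: alpha_def polar_e)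
  also have "\<dots> = (\<Prod>i\<in>{0..<s}. h (witness_param s i)) * (\<Prod>i\<in>{s..<2 * s}. h (witness_param s i))
      * (\<Prod>i\<in>{2 * s..<r}. h (witness_param s i))"
    using assms by (simp add: prod.atLeastLessThan_concat flip: atLeast0LessThan)
  also have "\<dots> = (\<Prod>i\<in>{0..<s}. h \<i>) * (\<Prod>i\<in>{s..<2 * s}. h (- \<i>)) * (\<Prod>i\<in>{2 * s..<r}. h 0)"
    by (intro arg_cong2[where f = "(*)"] prod.cong) (auto simp: witness_param_def)
  also have "\<dots> = (h \<i> * h (- \<i>)) ^ s * h 0 ^ (r - 2 * s)"
    by (simp add: power_mult_distrib)
  also have "h \<i> * h (- \<i>) = of_nat (c * c) * (sq_x * sq_y) ^ e"
    by (simp add: h_def lin_x_conj_mult[symmetric] lin_y_conj_mult[symmetric] mult_ac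
        flip: power_mult_distrib)
  also have "h 0 = of_nat c * (var 0 * var 2) ^ e"
    by (simp add: h_def lin_x_def lin_y_def)
  also have "(of_nat (c * c) * (sq_x * sq_y) ^ e) ^ s * (of_nat c * (var 0 * var 2) ^ e) ^ (r - 2 * s) =
      witness_poly (c ^ r) (s * e) ((r - 2 * s) * e)"
  proof -
    have "(of_nat (c * c) * (sq_x * sq_y) ^ e) ^ s * (of_nat c * (var 0 * var 2) ^ e) ^ (r - 2 * s) =
        of_nat ((c * c) ^ s * c ^ (r - 2 * s)) * (sq_x * sq_y) ^ (s * e) * (var 0 * var 2) ^ ((r - 2 * s) * e)"
      by (simp only: power_mult_distrib of_nat_mult of_nat_power power_mult mult_ac)
    also have "(c * c) ^ s * c ^ (r - 2 * s) = c ^ r"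
      using assms by (simp flip: power_add power2_eq_square power_mult)
    finally show ?thesis
      by (simp add: witness_poly_def power_mult_distrib mult_ac)
  qed
  finally show ?thesis
    by (simp only: c_def)
qed

lemma proj_witness_poly_nonzero:
  assumes "0 < c" "p \<le> 2 * N" "2 * p \<le> 2 * N + A"
  shows "proj p (witness_poly c N A) \<noteq> 0"
proof -
  obtain u v where uv: "u \<le> N" "v \<le> N" "u + v = p"
    using assms(2) by (intro that[of "p - min p N" "min p N"]) auto
  define m where "m = xy_monomial (2 * N + A - 2 * p) 0 (2 * N + A - 2 * p) 0"
  have "2 * (N - u) + A = 2 * N + A - 2 * p + 2 * v" "2 * (N - v) + A = 2 * N + A - 2 * p + 2 * u"
    using uv assms(3) by auto
  then have "m + xy_monomial (2 * v) (2 * u) (2 * u) (2 * v) \<in> keys (witness_poly c N A)"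
    using in_keys_witness_poly[OF assms(1) uv(1,2), of A] by (simp add: m_def xy_monomial_add)
  then have "m \<in> keys ((Omega_plus ^^ (2 * v + 2 * u)) (witness_poly c N A))"
    by (rule in_keys_Omega_plus_iterate[OF nonneg_coeffs_witness_poly])
  moreover have "2 * v + 2 * u = 2 * p"
    using uv(3) by simp
  ultimately show ?thesis
    by (intro proj_nonzero[of _ m])
       (simp_all add: nonneg_coeffs_witness_poly even_in_x1_witness_poly m_def lookup_xy_monomial[simplified])
qed

theorem mainTheorem3:
  fixes e r p d :: nat
  assumes "e \<ge> 1" and "d = 2 * e" and "r \<ge> 2" and "p \<le> (r * e) div 2"
  shows "\<exists>F :: nat \<Rightarrow> cpoly. (\<forall>i<r. binary_form d (F i)) \<and> proj p (alpha r e F) \<noteq> 0"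
proof -
  define s where "s = r div 2"
  define F where "F = (\<lambda>i. lin_x (witness_param s i) ^ d)"
  have s: "2 * s \<le> r" "r \<le> 4 * s"
    using assms(3) by (simp_all add: s_def)
  then have "r * e div 2 \<le> 4 * s * e div 2"
    by (intro div_le_mono) simp
  then have p_bound: "p \<le> 2 * (s * e)"
    using assms(4) by (simp add: ac_simps)
  have "2 * (s * e) + (r - 2 * s) * e = r * e"
    using s(1) by (simp add: algebra_simps flip: add_mult_distrib)
  then have p_bound': "2 * p \<le> 2 * (s * e) + (r - 2 * s) * e"
    using assms(4) by linarith
  have "alpha r e F = witness_poly ((\<Prod>i<e. 2 * e - i) ^ r) (s * e) ((r - 2 * s) * e)"
    using alpha_witness_forms[OF s(1)] by (simp add: F_def assms(2))
  moreover have "0 < (\<Prod>i<e. 2 * e - i) ^ r"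
    by (auto intro!: prod_pos)
  ultimately have "proj p (alpha r e F) \<noteq> 0"
    using p_bound p_bound' by (simp add: proj_witness_poly_nonzero)
  moreover have "\<forall>i<r. binary_form d (F i)"
    by (simp add: F_def binary_form_lin_x_power)
  ultimately show ?thesis
    by blast
qed

end
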